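(* Let $(D_d)_{d\in\mathbb N}$ be convex open sets $D_d\subset\mathbb R^d$ with $\lambda_d(D_d)=1$, let $L_{0,d},L_{1,d}>0$, and let \[ C_d^1(L)=\{f\in C^1(D_d)\mid\|f\|_\infty\le1,\ \operatorname{Lip}(f)\le L_{0,d},\ \operatorname{Lip}(\nabla f)\le L_{1,d}\},\qquad F_d^1=\{f\in C^1(D_d)\mid \operatorname{Lip}(\nabla f)\le L_{1,d}\}. \] If $\varepsilon\in(0,1)$ and $L_{1,d}\operatorname{diam}(D_d)^2\le\varepsilon$, then $n(\varepsilon,C_d^1(L))=n(\varepsilon,F_d^1)=1$. Hence, if $\lim_{d\to\infty}L_{1,d}\operatorname{diam}(D_d)^2=0$, then for every $\varepsilon\in(0,1)$, $n(\varepsilon,C_d^1(L))=n(\varepsilon,F_d^1)=1$ for all sufficiently large $d$.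
   Context: $\operatorname{diam}(D)$ is the Euclidean diameter; Lipschitz constants are with respect to Euclidean norms on $D_d$. $n(\varepsilon,F_d)$ is the information complexity of integration $\int_{D_d}f(x)\,dx$ over $F_d$: the minimal number $n\ge0$ of function values (possibly adaptively chosen points in $D_d$, combined by an arbitrary map; constant algorithms when $n=0$) for which the worst-case error over $F_d$ is $\le\varepsilon$. *)

theory Defs
  imports "HOL-Analysis.Analysis"
begin

text \<open>fvec = real sequences with finite support, with the l2 inner product.
  The space R^d is the subspace Rd d of vectors supported in {0..<d}; on it the
  norm is the Euclidean norm.\<close>

typedef fvec = "{x::nat \<Rightarrow> real. finite {i. x i \<noteq> 0}}"
  morphisms coord Abs_fvec
  by (rule exI[of _ "\<lambda>_. 0"]) simp

setup_lifting type_definition_fvec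

lemma fin_supp2:
  fixes x y :: "nat \<Rightarrow> real" and f :: "real \<Rightarrow> real \<Rightarrow> real"
  assumes "finite {i. x i \<noteq> 0}" "finite {i. y i \<noteq> 0}" "f 0 0 = 0"
  shows "finite {i. f (x i) (y i) \<noteq> 0}"
  by (rule finite_subset[of _ "{i. x i \<noteq> 0} \<union> {i. y i \<noteq> 0}"]) (use assms in auto)

instantiation fvec :: real_vector
begin
lift_definition zero_fvec :: fvec is "\<lambda>_. 0" by simp
lift_definition plus_fvec :: "fvec \<Rightarrow> fvec \<Rightarrow> fvec" is "\<lambda>x y i. x i + y i"
  by (rule fin_supp2[where f="(+)"]) auto
lift_definition minus_fvec :: "fvec \<Rightarrow> fvec \<Rightarrow> fvec" is "\<lambda>x y i. x i - y i"
  by (rule fin_supp2[where f="(-)"]) auto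
lift_definition uminus_fvec :: "fvec \<Rightarrow> fvec" is "\<lambda>x i. - x i" by simp
lift_definition scaleR_fvec :: "real \<Rightarrow> fvec \<Rightarrow> fvec" is "\<lambda>r x i. r * x i"
  by (erule finite_subset[rotated]) auto
instance
  by standard (transfer; simp add: fun_eq_iff algebra_simps)+
end

lemma sum_supp_eq:
  fixes x y :: "nat \<Rightarrow> real"
  assumes "finite S" "{i. x i \<noteq> 0} \<subseteq> S" "finite {i. y i \<noteq> 0}"
  shows "(\<Sum>i\<in>{i. x i \<noteq> 0 \<or> y i \<noteq> 0}. x i * y i) = (\<Sum>i\<in>S. x i * y i)"
proof -
  have fin: "finite {i. x i \<noteq> 0 \<or> y i \<noteq> 0}"
    by (rule finite_subset[of _ "S \<union> {i. y i \<noteq> 0}"]) (use assms in auto)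
  have "(\<Sum>i\<in>{i. x i \<noteq> 0 \<or> y i \<noteq> 0}. x i * y i) = (\<Sum>i\<in>{i. x i \<noteq> 0}. x i * y i)"
    by (rule sum.mono_neutral_right) (use assms fin in auto)
  also have "\<dots> = (\<Sum>i\<in>S. x i * y i)"
    by (rule sum.mono_neutral_left) (use assms in auto)
  finally show ?thesis .
qed

instantiation fvec :: real_inner
begin
lift_definition inner_fvec :: "fvec \<Rightarrow> fvec \<Rightarrow> real" is
  "\<lambda>x y. \<Sum>i\<in>{i. x i \<noteq> 0 \<or> y i \<noteq> 0}. x i * y i" .
definition norm_fvec :: "fvec \<Rightarrow> real" where "norm_fvec x = sqrt (inner x x)"
definition dist_fvec :: "fvec \<Rightarrow> fvec \<Rightarrow> real" where "dist_fvec x y = norm (x - y)"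
definition sgn_fvec :: "fvec \<Rightarrow> fvec" where "sgn_fvec x = x /\<^sub>R norm x"
definition uniformity_fvec :: "(fvec \<times> fvec) filter" where
  "uniformity_fvec = (INF e\<in>{0<..}. principal {(x, y). dist x y < e})"
definition open_fvec :: "fvec set \<Rightarrow> bool" where
  "open_fvec U = (\<forall>x\<in>U. \<forall>\<^sub>F (x', y) in uniformity. x' = x \<longrightarrow> y \<in> U)"
instance
proof
  fix x y z :: fvec and r :: real
  show "inner x y = inner y x"
    by transfer (simp add: disj_commute mult.commute)
  show "inner (x + y) z = inner x z + inner y z"
  proof transfer
    fix x y z :: "nat \<Rightarrow> real"
    assume f: "finite {i. x i \<noteq> 0}" "finite {i. y i \<noteq> 0}" "finite {i. z i \<noteq> 0}"
    let ?S = "{i. x i \<noteq> 0} \<union> {i. y i \<noteq> 0}"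
    have fS: "finite ?S" using f by simp
    have "(\<Sum>i\<in>{i. x i + y i \<noteq> 0 \<or> z i \<noteq> 0}. (x i + y i) * z i) = (\<Sum>i\<in>?S. (x i + y i) * z i)"
      by (rule sum_supp_eq) (use fS f in auto)
    moreover have "(\<Sum>i\<in>{i. x i \<noteq> 0 \<or> z i \<noteq> 0}. x i * z i) = (\<Sum>i\<in>?S. x i * z i)"
      by (rule sum_supp_eq) (use fS f in auto)
    moreover have "(\<Sum>i\<in>{i. y i \<noteq> 0 \<or> z i \<noteq> 0}. y i * z i) = (\<Sum>i\<in>?S. y i * z i)"
      by (rule sum_supp_eq) (use fS f in auto)
    ultimately show "(\<Sum>i\<in>{i. x i + y i \<noteq> 0 \<or> z i \<noteq> 0}. (x i + y i) * z i) =
       (\<Sum>i\<in>{i. x i \<noteq> 0 \<or> z i \<noteq> 0}. x i * z i) + (\<Sum>i\<in>{i. y i \<noteq> 0 \<or> z i \<noteq> 0}. y i * z i)"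
      by (simp add: sum.distrib distrib_right)
  qed
  show "inner (r *\<^sub>R x) y = r * inner x y"
  proof transfer
    fix r :: real and x y :: "nat \<Rightarrow> real"
    assume f: "finite {i. x i \<noteq> 0}" "finite {i. y i \<noteq> 0}"
    let ?S = "{i. x i \<noteq> 0}"
    have "(\<Sum>i\<in>{i. r * x i \<noteq> 0 \<or> y i \<noteq> 0}. r * x i * y i) = (\<Sum>i\<in>?S. r * x i * y i)"
      using sum_supp_eq[of ?S "\<lambda>i. r * x i" y] f by auto
    moreover have "(\<Sum>i\<in>{i. x i \<noteq> 0 \<or> y i \<noteq> 0}. x i * y i) = (\<Sum>i\<in>?S. x i * y i)"
      by (rule sum_supp_eq) (use f in auto)
    ultimately show "(\<Sum>i\<in>{i. r * x i \<noteq> 0 \<or> y i \<noteq> 0}. r * x i * y i) = r * (\<Sum>i\<in>{i. x i \<noteq> 0 \<or> y i \<noteq> 0}. x i * y i)"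
      by (simp add: sum_distrib_left mult.assoc)
  qed
  show "0 \<le> inner x x"
    by transfer (auto intro: sum_nonneg)
  show "inner x x = 0 \<longleftrightarrow> x = 0"
  proof transfer
    fix x :: "nat \<Rightarrow> real"
    assume f: "finite {i. x i \<noteq> 0}"
    have "(\<Sum>i\<in>{i. x i \<noteq> 0 \<or> x i \<noteq> 0}. x i * x i) = 0 \<longleftrightarrow> (\<forall>i\<in>{i. x i \<noteq> 0}. x i * x i = 0)"
      using f by (subst sum_nonneg_eq_0_iff) auto
    then show "((\<Sum>i\<in>{i. x i \<noteq> 0 \<or> x i \<noteq> 0}. x i * x i) = 0) = (x = (\<lambda>_. 0))"
      by (auto simp: fun_eq_iff)
  qed
  show "norm x = sqrt (inner x x)" by (simp add: norm_fvec_def)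
  show "dist x y = norm (x - y)" by (simp add: dist_fvec_def)
  show "sgn x = x /\<^sub>R norm x" by (simp add: sgn_fvec_def)
qed (simp_all add: uniformity_fvec_def open_fvec_def)
end

definition Rd :: "nat \<Rightarrow> fvec set" where
  "Rd d = {x. \<forall>i\<ge>d. coord x i = 0}"

definition emb :: "nat \<Rightarrow> (nat \<Rightarrow> real) \<Rightarrow> fvec" where
  "emb d x = Abs_fvec (\<lambda>i. if i < d then x i else 0)"

definition lebesgue_d :: "nat \<Rightarrow> fvec measure" where
  "lebesgue_d d = distr (PiM {..<d} (\<lambda>_. lborel)) borel (emb d)"

definition C1_grad :: "nat \<Rightarrow> fvec set \<Rightarrow> (fvec \<Rightarrow> real) \<Rightarrow> (fvec \<Rightarrow> fvec) \<Rightarrow> bool" where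
  "C1_grad d D f g \<longleftrightarrow>
     (\<forall>x\<in>D. g x \<in> Rd d \<and> (f has_derivative (\<lambda>h. inner (g x) h)) (at x within Rd d))
     \<and> continuous_on D g"

definition F1 :: "nat \<Rightarrow> fvec set \<Rightarrow> real \<Rightarrow> (fvec \<Rightarrow> real) set" where
  "F1 d D L1 = {f. \<exists>g. C1_grad d D f g \<and> L1-lipschitz_on D g}"

definition C1L :: "nat \<Rightarrow> fvec set \<Rightarrow> real \<Rightarrow> real \<Rightarrow> (fvec \<Rightarrow> real) set" where
  "C1L d D L0 L1 = {f. \<exists>g. C1_grad d D f g \<and> (\<forall>x\<in>D. \<bar>f x\<bar> \<le> 1)
                        \<and> L0-lipschitz_on D f \<and> L1-lipschitz_on D g}"

text \<open>An adaptive algorithm using n function values: the k-th point is psi k applied to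
  the list of the k values already computed; the output is phi applied to the list of
  all n values (for n = 0 this is a constant algorithm).\<close>
fun info :: "(nat \<Rightarrow> real list \<Rightarrow> 'a) \<Rightarrow> ('a \<Rightarrow> real) \<Rightarrow> nat \<Rightarrow> real list" where
  "info psi f 0 = []"
| "info psi f (Suc k) = info psi f k @ [f (psi k (info psi f k))]"

definition err_le :: "'a measure \<Rightarrow> 'a set \<Rightarrow> ('a \<Rightarrow> real) set \<Rightarrow> nat
     \<Rightarrow> (nat \<Rightarrow> real list \<Rightarrow> 'a) \<Rightarrow> (real list \<Rightarrow> real) \<Rightarrow> real \<Rightarrow> bool" where
  "err_le M D F n psi phi eps \<longleftrightarrow>
     (\<forall>f\<in>F. \<bar>(LINT x:D|M. f x) - phi (info psi f n)\<bar> \<le> eps)"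

definition inf_compl :: "'a measure \<Rightarrow> 'a set \<Rightarrow> real \<Rightarrow> ('a \<Rightarrow> real) set \<Rightarrow> nat" where
  "inf_compl M D eps F = (LEAST n. \<exists>psi phi. (\<forall>k ys. psi k ys \<in> D) \<and> err_le M D F n psi phi eps)"

definition diam :: "fvec set \<Rightarrow> ereal" where
  "diam D = (SUP x\<in>D. SUP y\<in>D. ereal (dist x y))"

end

(* The one-point rule f(c) at the centroid c of D does the job. It is exact on affine functions,
   since the mean of <a, x - c> over D vanishes, and for f with L1-Lipschitz gradient the
   linearisation error at c is at most L1 |x - c|^2 <= L1 diam(D)^2 <= eps. The centroid lies in D:
   otherwise the open convex set D lies in an open half-space {<b, x - c> > 0}, on which
   <b, x - c> has positive mean. Zero function values do not suffice, because a constant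
   algorithm cannot be eps-close to both integrals of the constants 1 and -1 when eps < 1. *)

theory Submission
  imports Defs
begin

section \<open>Coordinates and the subspaces \<open>Rd d\<close>\<close>

definition unit_fvec :: "nat \<Rightarrow> fvec" where
  "unit_fvec i = Abs_fvec (\<lambda>j. if j = i then 1 else 0)"

lemma coord_unit_fvec: "coord (unit_fvec i) j = (if j = i then 1 else 0)"
  unfolding unit_fvec_def by (subst Abs_fvec_inverse) auto

lemma coord_zero [simp]: "coord 0 j = 0"
  by (simp add: zero_fvec.rep_eq)

lemma coord_add [simp]: "coord (x + y) j = coord x j + coord y j"
  by (simp add: plus_fvec.rep_eq)

lemma coord_diff [simp]: "coord (x - y) j = coord x j - coord y j"
  by (simp add: minus_fvec.rep_eq)

lemma coord_scaleR [simp]: "coord (c *\<^sub>R x) j = c * coord x j"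
  by (simp add: scaleR_fvec.rep_eq)

lemma coord_sum: "coord (sum f S) j = (\<Sum>i\<in>S. coord (f i) j)"
  by (induction S rule: infinite_finite_induct) auto

lemma inner_unit_fvec: "inner x (unit_fvec i) = coord x i"
proof -
  let ?S = "{j. coord x j \<noteq> 0 \<or> coord (unit_fvec i) j \<noteq> 0}"
  have "finite ?S"
    by (rule finite_subset[of _ "{j. coord x j \<noteq> 0} \<union> {i}"])
       (use coord[of x] in \<open>auto simp: coord_unit_fvec\<close>)
  have "inner x (unit_fvec i) = (\<Sum>j\<in>?S. coord x j * coord (unit_fvec i) j)"
    by (simp add: inner_fvec.rep_eq)
  also have "\<dots> = (\<Sum>j\<in>?S. if j = i then coord x i else 0)"
    by (rule sum.cong) (auto simp: coord_unit_fvec)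
  also have "\<dots> = coord x i"
    using \<open>finite ?S\<close> by (simp add: coord_unit_fvec)
  finally show ?thesis .
qed

lemma unit_fvec_inner: "inner (unit_fvec i) x = coord x i"
  by (simp add: inner_commute inner_unit_fvec)

lemma norm_unit_fvec: "norm (unit_fvec i) = 1"
  by (simp add: norm_eq_sqrt_inner inner_unit_fvec coord_unit_fvec)

lemma Rd_eq_sum_coord: "x \<in> Rd d \<Longrightarrow> x = (\<Sum>i<d. coord x i *\<^sub>R unit_fvec i)"
  by (rule coord_inject[THEN iffD1], rule ext)
     (auto simp: Rd_def coord_sum coord_unit_fvec if_distrib cong: if_cong)

lemma inner_Rd: "a \<in> Rd d \<Longrightarrow> inner a x = (\<Sum>i<d. coord a i * coord x i)"
  by (subst Rd_eq_sum_coord[of a d]) (simp_all add: inner_sum_left unit_fvec_inner)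

lemma closed_Rd: "closed (Rd d)"
proof -
  have "Rd d = (\<Inter>i\<in>{d..}. {x. inner x (unit_fvec i) = 0})"
    by (auto simp: Rd_def inner_unit_fvec)
  then show ?thesis
    by (simp only:) (intro closed_INT ballI closed_Collect_eq continuous_intros)
qed

lemma subspace_Rd: "subspace (Rd d)"
  by (auto simp: subspace_def Rd_def)

text \<open>\<open>fvec\<close> is infinite-dimensional, hence not \<open>heine_borel\<close>: compactness inside \<open>Rd d\<close> has to be
  proved by hand, and the library's separating hyperplane theorems do not apply.\<close>
lemma compact_cball_Int_Rd: "compact (cball 0 R \<inter> Rd d)"
proof (induction d arbitrary: R)
  case 0
  have "Rd 0 = {0}"
    by (auto simp: Rd_def subspace_0[OF subspace_Rd] coord_inject[symmetric] fun_eq_iff)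
  then show ?case
    by (simp add: finite_imp_compact)
next
  case (Suc d)
  let ?f = "\<lambda>(y, t). y + t *\<^sub>R unit_fvec d"
  let ?K = "?f ` ((cball 0 (2 * R) \<inter> Rd d) \<times> cball 0 R)"
  have "continuous_on UNIV ?f"
    unfolding case_prod_unfold by (intro continuous_intros)
  then have "compact ?K"
    by (intro compact_continuous_image[OF continuous_on_subset] compact_Times Suc.IH compact_cball) auto
  moreover have "cball 0 R \<inter> Rd (Suc d) \<subseteq> ?K"
  proof
    fix x assume x: "x \<in> cball 0 R \<inter> Rd (Suc d)"
    define t where "t = coord x d"
    have t: "\<bar>t\<bar> \<le> R"
      using Cauchy_Schwarz_ineq2[of x "unit_fvec d"] x
      by (simp add: t_def inner_unit_fvec norm_unit_fvec)
    have "x - t *\<^sub>R unit_fvec d \<in> cball 0 (2 * R)"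
      using x t norm_triangle_ineq4[of x "t *\<^sub>R unit_fvec d"] by (simp add: norm_unit_fvec)
    moreover have "x - t *\<^sub>R unit_fvec d \<in> Rd d"
      using x by (simp add: Rd_def t_def coord_unit_fvec)
    moreover have "x = ?f (x - t *\<^sub>R unit_fvec d, t)"
      by (simp only: prod.case diff_add_cancel)
    ultimately show "x \<in> ?K"
      using t by (intro image_eqI) auto
  qed
  ultimately have "compact (?K \<inter> (cball 0 R \<inter> Rd (Suc d)))"
    by (intro compact_Int_closed closed_Int closed_cball closed_Rd)
  then show ?case
    using \<open>cball 0 R \<inter> Rd (Suc d) \<subseteq> ?K\<close> by (metis Int_absorb1)
qed

lemma compact_closure_Rd:
  assumes "bounded S" "S \<subseteq> Rd d"
  shows "compact (closure S)"
proof -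
  obtain R where "\<forall>x\<in>S. norm x \<le> R"
    using assms(1) bounded_iff by blast
  then have "S \<subseteq> cball 0 R \<inter> Rd d"
    using assms(2) by auto
  then have "closure S \<subseteq> cball 0 R \<inter> Rd d"
    by (intro closure_minimal closed_Int closed_cball closed_Rd)
  then have "closure S = (cball 0 R \<inter> Rd d) \<inter> closure S"
    by blast
  then show ?thesis
    by (metis compact_Int_closed compact_cball_Int_Rd closed_closure)
qed

section \<open>Separation from open convex sets\<close>

lemma convex_shrink_closure:
  assumes sub: "D \<subseteq> Rd d" and cvx: "convex D" and p: "p \<in> D"
    and \<rho>: "\<rho> > 0" "ball p \<rho> \<inter> Rd d \<subseteq> D"
    and k: "k \<in> closure D" and t: "0 \<le> t" "t < 1"
  shows "p + t *\<^sub>R (k - p) \<in> D"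
proof (cases "t = 0")
  case True
  then show ?thesis using p by simp
next
  case False
  then have "t > 0" using t by simp
  obtain k' where k': "k' \<in> D" "dist k' k < \<rho> * (1 - t) / t"
    using k \<open>t > 0\<close> t \<rho> unfolding closure_approachable by (meson divide_pos_pos mult_pos_pos diff_gt_0_iff_gt)
  \<comment> \<open>\<open>p'\<close> lies in the ball around \<open>p\<close> and \<open>(1 - t) p' + t k'\<close> is the target point\<close>
  define p' where "p' = p + (t / (1 - t)) *\<^sub>R (k - k')"
  have "k \<in> Rd d"
    using closure_minimal[OF sub closed_Rd] k by blast
  then have "p' \<in> Rd d"
    using k' sub p subspace_Rd by (auto simp: p'_def intro!: subspace_add subspace_scale subspace_diff)
  moreover have "dist p' p < \<rho>"
  proof -
    have "dist p' p = t / (1 - t) * norm (k - k')"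
      using t by (simp add: p'_def dist_norm)
    also have "\<dots> < t / (1 - t) * (\<rho> * (1 - t) / t)"
      using k' \<open>t > 0\<close> t by (intro mult_strict_left_mono) (auto simp: dist_norm norm_minus_commute)
    also have "\<dots> = \<rho>"
      using \<open>t > 0\<close> t by (simp add: field_simps)
    finally show ?thesis .
  qed
  ultimately have "p' \<in> D"
    using \<rho> by (auto simp: dist_commute)
  then have "(1 - t) *\<^sub>R p' + t *\<^sub>R k' \<in> D"
    using convexD[OF cvx _ k'(1)] t by simp
  moreover have "(1 - t) *\<^sub>R p' = (1 - t) *\<^sub>R p + t *\<^sub>R (k - k')"
    using t by (simp add: p'_def scaleR_add_right)
  then have "(1 - t) *\<^sub>R p' + t *\<^sub>R k' = p + t *\<^sub>R (k - p)"
    by (simp add: algebra_simps)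
  ultimately show ?thesis
    by simp
qed

text \<open>The shrunken closure \<open>p + t (closure D - p)\<close> is a compact convex subset of \<open>D\<close>, so the
  nearest point to \<open>c\<close> in it yields a separating unit normal.\<close>
lemma unit_normal_separating_shrunk_closure:
  assumes sub: "D \<subseteq> Rd d" and cvx: "convex D" and bnd: "bounded D" and p: "p \<in> D"
    and \<rho>: "\<rho> > 0" "ball p \<rho> \<inter> Rd d \<subseteq> D"
    and c: "c \<in> Rd d" "c \<notin> D" and t: "0 \<le> t" "t < 1"
  shows "\<exists>b\<in>Rd d. norm b = 1 \<and> (\<forall>x\<in>D. 0 \<le> inner b (p + t *\<^sub>R (x - p) - c))"
proof -
  let ?C = "(\<lambda>k. p + t *\<^sub>R (k - p)) ` closure D"
  have "compact ?C"
    by (intro compact_continuous_image compact_closure_Rd[OF bnd sub] continuous_intros)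
  have "convex ?C"
  proof -
    have "?C = (\<lambda>k. (1 - t) *\<^sub>R p + t *\<^sub>R k) ` closure D"
      by (simp add: algebra_simps)
    then show ?thesis
      using convex_affinity[OF convex_closure[OF cvx]] by simp
  qed
  have "?C \<subseteq> D"
    using convex_shrink_closure[OF sub cvx p \<rho> _ t] by blast
  have "?C \<noteq> {}"
    using p closure_subset by blast
  moreover have "continuous_on ?C (dist c)"
    by (intro continuous_intros)
  ultimately obtain y where y: "y \<in> ?C" and ymin: "\<forall>z\<in>?C. dist c y \<le> dist c z"
    using continuous_attains_inf[OF \<open>compact ?C\<close>] by blast
  have "y \<noteq> c" "y \<in> Rd d"
    using y \<open>?C \<subseteq> D\<close> c sub by auto
  have "0 \<le> inner (y - c) (z - c)" if "z \<in> ?C" for z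
  proof -
    have "inner (c - y) (z - y) \<le> 0"
      by (rule any_closest_point_dot[OF \<open>convex ?C\<close> compact_imp_closed[OF \<open>compact ?C\<close>] y that])
         (use ymin in \<open>simp add: dist_commute\<close>)
    then have "inner (y - c) (y - c) \<le> inner (y - c) (z - c)"
      by (simp add: inner_diff_left inner_diff_right inner_commute algebra_simps)
    then show ?thesis
      by (metis inner_ge_zero order_trans)
  qed
  moreover have "p + t *\<^sub>R (x - p) \<in> ?C" if "x \<in> D" for x
    using that closure_subset by blast
  ultimately have "\<forall>x\<in>D. 0 \<le> inner (sgn (y - c)) (p + t *\<^sub>R (x - p) - c)"
    by (simp add: sgn_div_norm)
  moreover have "sgn (y - c) \<in> Rd d" "norm (sgn (y - c)) = 1"
    using \<open>y \<noteq> c\<close> \<open>y \<in> Rd d\<close> c subspace_Rd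
    by (auto simp: sgn_div_norm norm_sgn intro!: subspace_scale subspace_diff)
  ultimately show ?thesis
    by blast
qed

text \<open>Let \<open>t \<rightarrow> 1\<close>; along a subsequence the unit normals of the shrunken closures converge.\<close>
lemma open_convex_supporting_unit_normal:
  assumes sub: "D \<subseteq> Rd d" and cvx: "convex D" and bnd: "bounded D"
    and opn: "openin (top_of_set (Rd d)) D" and p: "p \<in> D"
    and c: "c \<in> Rd d" "c \<notin> D"
  shows "\<exists>b\<in>Rd d. norm b = 1 \<and> (\<forall>x\<in>D. 0 \<le> inner b (x - c))"
proof -
  obtain \<rho> where \<rho>: "\<rho> > 0" "ball p \<rho> \<inter> Rd d \<subseteq> D"
    using opn p by (force simp: openin_contains_ball)
  define t where "t n = real n / real (Suc n)" for n
  have "0 \<le> t n" "t n < 1" for n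
    by (simp_all add: t_def)
  then have "\<forall>n. \<exists>b\<in>Rd d. norm b = 1 \<and> (\<forall>x\<in>D. 0 \<le> inner b (p + t n *\<^sub>R (x - p) - c))"
    using unit_normal_separating_shrunk_closure[OF sub cvx bnd p \<rho> c] by blast
  then obtain B where B: "\<And>n. B n \<in> Rd d" "\<And>n. norm (B n) = 1"
    "\<And>n x. x \<in> D \<Longrightarrow> 0 \<le> inner (B n) (p + t n *\<^sub>R (x - p) - c)"
    by metis
  have "\<forall>n. B n \<in> cball 0 1 \<inter> Rd d"
    using B by simp
  then obtain b r where b: "b \<in> Rd d" and r: "strict_mono r" "(B \<circ> r) \<longlonglongrightarrow> b"
    using compact_cball_Int_Rd[THEN compact_imp_seq_compact, THEN seq_compactE] by blast
  have "(\<lambda>n. norm ((B \<circ> r) n)) \<longlonglongrightarrow> norm b"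
    using r(2) by (rule tendsto_norm)
  then have "norm b = 1"
    using B(2) by (simp add: LIMSEQ_const_iff o_def)
  moreover have "0 \<le> inner b (x - c)" if "x \<in> D" for x
  proof -
    have "t \<longlonglongrightarrow> 1"
      unfolding t_def by (rule LIMSEQ_n_over_Suc_n)
    then have "(\<lambda>n. inner ((B \<circ> r) n) (p + (t \<circ> r) n *\<^sub>R (x - p) - c))
        \<longlonglongrightarrow> inner b (p + 1 *\<^sub>R (x - p) - c)"
      by (intro tendsto_intros r(2) LIMSEQ_subseq_LIMSEQ[OF _ r(1)])
    then show ?thesis
      using B(3)[OF that] by (intro LIMSEQ_le_const) auto
  qed
  ultimately show ?thesis
    using b by blast
qed

lemma open_convex_separating:
  assumes sub: "D \<subseteq> Rd d" and cvx: "convex D" and bnd: "bounded D"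
    and opn: "openin (top_of_set (Rd d)) D" and c: "c \<in> Rd d" "c \<notin> D"
  shows "\<exists>b\<in>Rd d. \<forall>x\<in>D. 0 < inner b (x - c)"
proof (cases "D = {}")
  case True
  then show ?thesis
    using c(1) by blast
next
  case False
  then obtain b where b: "b \<in> Rd d" "norm b = 1" "\<And>x. x \<in> D \<Longrightarrow> 0 \<le> inner b (x - c)"
    using open_convex_supporting_unit_normal[OF sub cvx bnd opn _ c] by blast
  have "0 < inner b (x - c)" if x: "x \<in> D" for x
  proof -
    obtain e where e: "e > 0" "ball x e \<inter> Rd d \<subseteq> D"
      using opn x by (force simp: openin_contains_ball)
    have "x - (e / 2) *\<^sub>R b \<in> Rd d"
      using x sub b(1) subspace_Rd by (blast intro: subspace_diff subspace_scale)
    moreover have "dist x (x - (e / 2) *\<^sub>R b) < e"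
      using b(2) e(1) by (simp add: dist_norm)
    ultimately have "x - (e / 2) *\<^sub>R b \<in> D"
      using e(2) by auto
    from b(3)[OF this] have "0 \<le> inner b (x - c) - e / 2 * inner b b"
      by (simp add: inner_diff_right algebra_simps)
    moreover have "inner b b = 1"
      using b(2) by (simp add: norm_eq_sqrt_inner)
    ultimately show ?thesis
      using e(1) by simp
  qed
  then show ?thesis
    using b(1) by blast
qed

section \<open>The centroid rule on a convex domain of unit volume\<close>

lemma lipschitz_gradient_linearization:
  fixes f :: "'a::real_inner \<Rightarrow> real"
  assumes seg: "closed_segment a b \<subseteq> S"
    and f': "\<And>y. y \<in> S \<Longrightarrow> (f has_derivative inner (g y)) (at y within S)"
    and lip: "L-lipschitz_on S g"
  shows "\<bar>f b - f a - inner (g a) (b - a)\<bar> \<le> L * (norm (b - a))\<^sup>2"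
proof -
  have onorm_le: "onorm (inner (g y) - inner (g a)) \<le> L * norm (b - a)"
    if y: "y \<in> closed_segment a b" for y
  proof (rule onorm_bound)
    show "0 \<le> L * norm (b - a)"
      using lipschitz_on_nonneg[OF lip] by simp
    have "norm (g y - g a) \<le> L * norm (y - a)"
      using lipschitz_onD[OF lip, of y a] seg y by (simp add: dist_norm subset_iff)
    also have "\<dots> \<le> L * norm (b - a)"
      by (rule mult_left_mono[OF segment_bound1[OF y] lipschitz_on_nonneg[OF lip]])
    finally have "norm (g y - g a) \<le> L * norm (b - a)" .
    moreover fix h
    have "norm ((inner (g y) - inner (g a)) h) \<le> norm (g y - g a) * norm h"
      using Cauchy_Schwarz_ineq2[of "g y - g a" h] by (simp add: inner_diff_left)
    ultimately show "norm ((inner (g y) - inner (g a)) h) \<le> L * norm (b - a) * norm h"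
      by (meson mult_right_mono norm_ge_zero order_trans)
  qed
  have "norm (f b - f a - inner (g a) (b - a)) \<le> norm (b - a) * (L * norm (b - a))"
  proof (rule differentiable_bound_linearization[where S="closed_segment a b" and f'="\<lambda>y. inner (g y)"])
    show "a + t *\<^sub>R (b - a) \<in> closed_segment a b" if "t \<in> {0..1}" for t
      using that by (auto simp: in_segment algebra_simps intro!: exI[of _ t])
    show "(f has_derivative inner (g y)) (at y within closed_segment a b)"
      if "y \<in> closed_segment a b" for y
      using f' seg that has_derivative_subset by blast
  qed (use onorm_le in auto)
  then show ?thesis
    by (simp add: power2_eq_square mult_ac)
qed

lemma set_integral_sum:
  fixes f :: "'i \<Rightarrow> 'a \<Rightarrow> 'b::{banach, second_countable_topology}"
  assumes "\<And>i. i \<in> I \<Longrightarrow> set_integrable M A (f i)"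
  shows "(LINT x:A|M. (\<Sum>i\<in>I. f i x)) = (\<Sum>i\<in>I. LINT x:A|M. f i x)"
  using assms unfolding set_integrable_def set_lebesgue_integral_def
  by (simp add: scaleR_sum_right integral_sum)

lemma set_integral_pos:
  fixes h :: "'a \<Rightarrow> real"
  assumes int: "set_integrable M A h" and A: "A \<in> sets M" "emeasure M A \<noteq> 0"
    and pos: "\<And>x. x \<in> A \<Longrightarrow> 0 < h x"
  shows "0 < (LINT x:A|M. h x)"
proof -
  let ?h = "\<lambda>x. indicator A x *\<^sub>R h x"
  have nonneg: "AE x in M. 0 \<le> ?h x"
    using pos by (auto simp: indicator_def less_imp_le)
  have "(LINT x:A|M. h x) \<noteq> 0"
  proof
    assume "(LINT x:A|M. h x) = 0"
    then have "AE x in M. ?h x = 0"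
      using integral_nonneg_eq_0_iff_AE[OF int[unfolded set_integrable_def] nonneg]
      by (simp add: set_lebesgue_integral_def)
    then have "AE x in M. x \<notin> A"
      by (rule eventually_mono) (use pos in \<open>fastforce simp: indicator_def\<close>)
    then show False
      using A AE_iff_null_sets[OF A(1)] by (auto dest: null_setsD1)
  qed
  moreover have "0 \<le> (LINT x:A|M. h x)"
    unfolding set_lebesgue_integral_def using nonneg by (rule integral_nonneg_AE)
  ultimately show ?thesis
    by simp
qed

lemma sets_lebesgue_d [simp, measurable_cong]: "sets (lebesgue_d d) = sets borel"
  by (simp add: lebesgue_d_def)

locale unit_volume_convex_domain =
  fixes d :: nat and D :: "fvec set"
  assumes D_subset: "D \<subseteq> Rd d" and convex_D: "convex D" and bounded_D: "bounded D"
    and openin_D: "openin (top_of_set (Rd d)) D"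
    and emeasure_D: "emeasure (lebesgue_d d) D = 1"
begin

lemma D_sets: "D \<in> sets (lebesgue_d d)"
proof -
  obtain T where "open T" "D = Rd d \<inter> T"
    using openin_D by (auto simp: openin_open)
  then show ?thesis
    using closed_Rd by auto
qed

lemma measure_D: "measure (lebesgue_d d) D = 1"
  using emeasure_D by (simp add: measure_def)

lemma set_integrable_bounded_continuous:
  fixes h :: "fvec \<Rightarrow> real"
  assumes "continuous_on D h" "\<And>x. x \<in> D \<Longrightarrow> \<bar>h x\<bar> \<le> B"
  shows "set_integrable (lebesgue_d d) D h"
  unfolding set_integrable_def
proof (rule integrableI_bounded_set[where A=D and B=B])
  show "(\<lambda>x. indicator D x *\<^sub>R h x) \<in> borel_measurable (lebesgue_d d)"
    using borel_measurable_continuous_on_indicator[OF _ assms(1)] D_sets by simp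
qed (use D_sets emeasure_D assms(2) in auto)

lemma set_integral_const_D [simp]: "(LINT x:D|lebesgue_d d. c) = (c :: real)"
  using set_integral_const[OF D_sets] emeasure_D measure_D by simp

lemma set_integrable_const_D: "set_integrable (lebesgue_d d) D (\<lambda>_. c :: real)"
  by (rule set_integrable_bounded_continuous[where B="\<bar>c\<bar>"]) auto

lemma set_integrable_inner: "set_integrable (lebesgue_d d) D (\<lambda>x. inner a x)"
proof -
  obtain R where R: "\<And>x. x \<in> D \<Longrightarrow> norm x \<le> R"
    using bounded_D bounded_iff by blast
  show ?thesis
  proof (rule set_integrable_bounded_continuous[where B="norm a * R"])
    show "continuous_on D (inner a)"
      by (intro continuous_intros)
    show "\<bar>inner a x\<bar> \<le> norm a * R" if "x \<in> D" for x
      using Cauchy_Schwarz_ineq2[of a x] mult_left_mono[OF R[OF that] norm_ge_zero[of a]] by linarith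
  qed
qed

lemma set_integral_abs_le:
  fixes h :: "fvec \<Rightarrow> real"
  assumes "set_integrable (lebesgue_d d) D h" "\<And>x. x \<in> D \<Longrightarrow> \<bar>h x\<bar> \<le> B"
  shows "\<bar>LINT x:D|lebesgue_d d. h x\<bar> \<le> B"
proof -
  have "(LINT x:D|lebesgue_d d. h x) \<le> (LINT x:D|lebesgue_d d. B)"
    by (rule set_integral_mono[OF assms(1) set_integrable_const_D]) (use assms(2) in \<open>force simp: abs_le_iff\<close>)
  moreover have "(LINT x:D|lebesgue_d d. - B) \<le> (LINT x:D|lebesgue_d d. h x)"
    by (rule set_integral_mono[OF set_integrable_const_D assms(1)]) (use assms(2) in \<open>force simp: abs_le_iff\<close>)
  ultimately show ?thesis
    by simp
qed

definition centroid :: fvec where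
  "centroid = (\<Sum>i<d. (LINT x:D|lebesgue_d d. coord x i) *\<^sub>R unit_fvec i)"

lemma coord_centroid: "coord centroid i = (if i < d then (LINT x:D|lebesgue_d d. coord x i) else 0)"
  by (simp add: centroid_def coord_sum coord_unit_fvec if_distrib cong: if_cong)

lemma centroid_Rd: "centroid \<in> Rd d"
  by (simp add: Rd_def coord_centroid)

lemma set_integral_inner_centroid:
  assumes "a \<in> Rd d"
  shows "(LINT x:D|lebesgue_d d. inner a x) = inner a centroid"
proof -
  have coord_integrable: "set_integrable (lebesgue_d d) D (\<lambda>x. coord a i * coord x i)" for i
    using set_integrable_inner[of "coord a i *\<^sub>R unit_fvec i"]
    by (simp add: unit_fvec_inner)
  have "(LINT x:D|lebesgue_d d. inner a x) = (\<Sum>i<d. LINT x:D|lebesgue_d d. coord a i * coord x i)"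
    using set_integral_sum[OF coord_integrable] by (simp add: inner_Rd[OF assms])
  also have "\<dots> = inner a centroid"
    by (simp add: inner_Rd[OF assms] coord_centroid)
  finally show ?thesis .
qed

lemma centroid_in_D: "centroid \<in> D"
proof (rule ccontr)
  assume "centroid \<notin> D"
  then obtain b where b: "b \<in> Rd d" "\<And>x. x \<in> D \<Longrightarrow> 0 < inner b (x - centroid)"
    using open_convex_separating[OF D_subset convex_D bounded_D openin_D centroid_Rd] by blast
  have integrable: "set_integrable (lebesgue_d d) D (\<lambda>x. inner b (x - centroid))"
    unfolding inner_diff_right by (intro set_integral_diff set_integrable_inner set_integrable_const_D)
  have "0 < (LINT x:D|lebesgue_d d. inner b (x - centroid))"
    by (rule set_integral_pos[OF integrable D_sets]) (use emeasure_D b(2) in auto)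
  moreover have "(LINT x:D|lebesgue_d d. inner b (x - centroid)) = 0"
    unfolding inner_diff_right
    by (simp add: set_integral_diff(2)[OF set_integrable_inner set_integrable_const_D]
        set_integral_inner_centroid[OF b(1)])
  ultimately show False
    by simp
qed

lemma centroid_rule_error:
  assumes f: "f \<in> F1 d D L" and r: "\<And>x. x \<in> D \<Longrightarrow> norm (x - centroid) \<le> r"
  shows "\<bar>(LINT x:D|lebesgue_d d. f x) - f centroid\<bar> \<le> L * r\<^sup>2"
proof -
  let ?c = centroid
  obtain g where C1: "C1_grad d D f g" and lip: "L-lipschitz_on D g"
    using f by (auto simp: F1_def)
  have f': "(f has_derivative inner (g x)) (at x within D)" if "x \<in> D" for x
    using C1 that D_subset has_derivative_subset by (fastforce simp: C1_grad_def)
  define R where "R x = f x - f ?c - inner (g ?c) (x - ?c)" for x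
  have R_bound: "\<bar>R x\<bar> \<le> L * r\<^sup>2" if x: "x \<in> D" for x
  proof -
    have "\<bar>R x\<bar> \<le> L * (norm (x - ?c))\<^sup>2"
      unfolding R_def
      by (rule lipschitz_gradient_linearization[OF _ f' lip])
         (use closed_segment_subset convex_D centroid_in_D x in auto)
    also have "\<dots> \<le> L * r\<^sup>2"
      using lipschitz_on_nonneg[OF lip] r[OF x]
      by (intro mult_left_mono power_mono) auto
    finally show ?thesis .
  qed
  have "continuous_on D f"
    using f' by (rule has_derivative_continuous_on)
  then have R_integrable: "set_integrable (lebesgue_d d) D R"
    unfolding R_def
    by (intro set_integrable_bounded_continuous[OF _ R_bound, unfolded R_def] continuous_intros)
  have "g ?c \<in> Rd d"
    using C1 centroid_in_D by (simp add: C1_grad_def)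
  have "(LINT x:D|lebesgue_d d. f x)
      = (LINT x:D|lebesgue_d d. (f ?c - inner (g ?c) ?c + inner (g ?c) x) + R x)"
    by (simp add: R_def inner_diff_right)
  also have "\<dots> = (LINT x:D|lebesgue_d d. f ?c - inner (g ?c) ?c + inner (g ?c) x)
      + (LINT x:D|lebesgue_d d. R x)"
    by (intro set_integral_add(2) set_integral_add(1) set_integrable_const_D set_integrable_inner
        R_integrable)
  also have "(LINT x:D|lebesgue_d d. f ?c - inner (g ?c) ?c + inner (g ?c) x) = f ?c"
    using set_integral_inner_centroid[OF \<open>g ?c \<in> Rd d\<close>]
    by (simp add: set_integral_add(2)[OF set_integrable_const_D set_integrable_inner])
  finally have "(LINT x:D|lebesgue_d d. f x) - f ?c = (LINT x:D|lebesgue_d d. R x)"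
    by simp
  then show ?thesis
    using set_integral_abs_le[OF R_integrable R_bound] by simp
qed

end

section \<open>Information complexity\<close>

lemma C1L_subset_F1: "C1L d D L0 L1 \<subseteq> F1 d D L1"
  unfolding C1L_def F1_def by blast

lemma const_in_C1L:
  assumes "\<bar>a\<bar> \<le> 1" "0 \<le> L0" "0 \<le> L1"
  shows "(\<lambda>_. a) \<in> C1L d D L0 L1"
proof -
  have "C1_grad d D (\<lambda>_. a) (\<lambda>_. 0)"
    using subspace_0[OF subspace_Rd] by (simp add: C1_grad_def inner_zero_left[abs_def])
  moreover have "L0-lipschitz_on D (\<lambda>_. a)" "L1-lipschitz_on D (\<lambda>_. 0::fvec)"
    using assms by (auto simp: lipschitz_on_def)
  ultimately show ?thesis
    using assms unfolding C1L_def by blast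
qed

lemma err_le_subset: "err_le M D F n psi phi eps \<Longrightarrow> G \<subseteq> F \<Longrightarrow> err_le M D G n psi phi eps"
  unfolding err_le_def by blast

lemma not_err_le_0:
  assumes "(\<lambda>_. 1) \<in> F" "(\<lambda>_. - 1) \<in> F" "\<And>c::real. (LINT x:D|M. c) = c" "eps < 1"
  shows "\<not> err_le M D F 0 psi phi eps"
proof
  assume "err_le M D F 0 psi phi eps"
  then have "\<forall>f\<in>F. \<bar>(LINT x:D|M. f x) - phi []\<bar> \<le> eps"
    by (simp add: err_le_def)
  then have "\<bar>(LINT x:D|M. 1) - phi []\<bar> \<le> eps" "\<bar>(LINT x:D|M. - 1) - phi []\<bar> \<le> eps"
    using assms(1,2) by blast+
  then have "\<bar>1 - phi []\<bar> \<le> eps" "\<bar>- 1 - phi []\<bar> \<le> eps"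
    by (simp_all only: assms(3))
  then show False
    using assms(4) by linarith
qed

lemma inf_compl_eq_1:
  assumes "\<forall>k ys. psi k ys \<in> D" "err_le M D F 1 psi phi eps"
    and "\<And>psi phi. \<not> err_le M D F 0 psi phi eps"
  shows "inf_compl M D eps F = 1"
  unfolding inf_compl_def
proof (rule Least_equality)
  show "\<exists>psi phi. (\<forall>k ys. psi k ys \<in> D) \<and> err_le M D F 1 psi phi eps"
    using assms(1,2) by blast
  fix n
  assume "\<exists>psi phi. (\<forall>k ys. psi k ys \<in> D) \<and> err_le M D F n psi phi eps"
  then show "1 \<le> n"
    using assms(3) by (cases n) auto
qed

lemma dist_le_diam: "x \<in> D \<Longrightarrow> y \<in> D \<Longrightarrow> ereal (dist x y) \<le> diam D"
  unfolding diam_def by (meson SUP_upper order_trans)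

lemma diam_squared_bound:
  assumes "ereal L * diam D ^ 2 \<le> ereal eps" "0 < L" "D \<noteq> {}"
  obtains r where "\<And>x y. x \<in> D \<Longrightarrow> y \<in> D \<Longrightarrow> dist x y \<le> r" "L * r\<^sup>2 \<le> eps"
proof (cases "diam D")
  case (real r)
  have "dist x y \<le> r" if "x \<in> D" "y \<in> D" for x y
    using dist_le_diam[OF that] real by simp
  moreover have "L * r\<^sup>2 \<le> eps"
    using assms(1) real by (simp add: power2_eq_square)
  ultimately show ?thesis
    using that by blast
next
  case PInf
  then show ?thesis
    using assms(1,2) by (simp add: power2_eq_square)
next
  case MInf
  obtain x where "x \<in> D"
    using assms(3) by blast
  then show ?thesis
    using dist_le_diam[OF \<open>x \<in> D\<close> \<open>x \<in> D\<close>] MInf by simp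
qed

lemma inf_compl_C1L_F1_eq_1:
  assumes sub: "D \<subseteq> Rd d" and cvx: "convex D" and opn: "openin (top_of_set (Rd d)) D"
    and vol: "emeasure (lebesgue_d d) D = 1" and L: "0 < L0" "0 < L1"
    and eps: "0 < eps" "eps < 1" and diam: "ereal L1 * diam D ^ 2 \<le> ereal eps"
  shows "inf_compl (lebesgue_d d) D eps (C1L d D L0 L1) = 1"
    and "inf_compl (lebesgue_d d) D eps (F1 d D L1) = 1"
proof -
  have "D \<noteq> {}"
    using vol by auto
  then obtain r where r: "\<And>x y. x \<in> D \<Longrightarrow> y \<in> D \<Longrightarrow> dist x y \<le> r" and "L1 * r\<^sup>2 \<le> eps"
    using diam_squared_bound[OF diam L(2)] by blast
  then have "bounded D"
    unfolding bounded_def using \<open>D \<noteq> {}\<close> by blast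
  interpret unit_volume_convex_domain d D
    by unfold_locales (fact sub cvx \<open>bounded D\<close> opn vol)+
  define psi where "psi = (\<lambda>(k::nat) (ys::real list). centroid)"
  have psi: "\<forall>k ys. psi k ys \<in> D"
    by (simp add: psi_def centroid_in_D)
  have err_F1: "err_le (lebesgue_d d) D (F1 d D L1) 1 psi hd eps"
    unfolding err_le_def
  proof
    fix f assume "f \<in> F1 d D L1"
    then have "\<bar>(LINT x:D|lebesgue_d d. f x) - f centroid\<bar> \<le> L1 * r\<^sup>2"
      by (rule centroid_rule_error) (use r centroid_in_D in \<open>simp add: dist_norm\<close>)
    then show "\<bar>(LINT x:D|lebesgue_d d. f x) - hd (info psi f 1)\<bar> \<le> eps"
      using \<open>L1 * r\<^sup>2 \<le> eps\<close> by (simp add: psi_def)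
  qed
  have constants: "(\<lambda>_. 1) \<in> C1L d D L0 L1" "(\<lambda>_. - 1) \<in> C1L d D L0 L1"
    using L by (simp_all add: const_in_C1L)
  show "inf_compl (lebesgue_d d) D eps (C1L d D L0 L1) = 1"
    by (rule inf_compl_eq_1[OF psi err_le_subset[OF err_F1 C1L_subset_F1]])
       (rule not_err_le_0[OF constants set_integral_const_D eps(2)])
  show "inf_compl (lebesgue_d d) D eps (F1 d D L1) = 1"
    by (rule inf_compl_eq_1[OF psi err_F1])
       (rule not_err_le_0[OF constants[THEN subsetD[OF C1L_subset_F1]] set_integral_const_D eps(2)])
qed

theorem proposition4p4:
  fixes D :: "nat \<Rightarrow> fvec set" and L0 L1 :: "nat \<Rightarrow> real"
  assumes sub: "\<And>d. d \<ge> 1 \<Longrightarrow> D d \<subseteq> Rd d"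
    and cvx: "\<And>d. d \<ge> 1 \<Longrightarrow> convex (D d)"
    and opn: "\<And>d. d \<ge> 1 \<Longrightarrow> openin (top_of_set (Rd d)) (D d)"
    and vol: "\<And>d. d \<ge> 1 \<Longrightarrow> emeasure (lebesgue_d d) (D d) = 1"
    and L0pos: "\<And>d. d \<ge> 1 \<Longrightarrow> L0 d > 0"
    and L1pos: "\<And>d. d \<ge> 1 \<Longrightarrow> L1 d > 0"
  shows "(\<forall>d\<ge>1. \<forall>eps. 0 < eps \<and> eps < 1 \<and> ereal (L1 d) * diam (D d) ^ 2 \<le> ereal eps \<longrightarrow>
            inf_compl (lebesgue_d d) (D d) eps (C1L d (D d) (L0 d) (L1 d)) = 1 \<and>
            inf_compl (lebesgue_d d) (D d) eps (F1 d (D d) (L1 d)) = 1)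
       \<and> (((\<lambda>d. ereal (L1 d) * diam (D d) ^ 2) \<longlonglongrightarrow> 0) \<longrightarrow>
            (\<forall>eps. 0 < eps \<and> eps < 1 \<longrightarrow>
              (\<forall>\<^sub>F d in sequentially.
                 inf_compl (lebesgue_d d) (D d) eps (C1L d (D d) (L0 d) (L1 d)) = 1 \<and>
                 inf_compl (lebesgue_d d) (D d) eps (F1 d (D d) (L1 d)) = 1)))"
    (is "(\<forall>d\<ge>1. \<forall>eps. ?small d eps \<longrightarrow> ?one d eps) \<and> ?asymptotic")
proof
  have one: "?one d eps" if "d \<ge> 1" "?small d eps" for d eps
    using inf_compl_C1L_F1_eq_1[OF sub cvx opn vol L0pos L1pos] that by auto
  then show "\<forall>d\<ge>1. \<forall>eps. ?small d eps \<longrightarrow> ?one d eps"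
    by blast
  show ?asymptotic
  proof (intro impI allI)
    fix eps :: real
    assume lim: "(\<lambda>d. ereal (L1 d) * diam (D d) ^ 2) \<longlonglongrightarrow> 0" and "0 < eps \<and> eps < 1"
    then have "\<forall>\<^sub>F d in sequentially. d \<ge> 1 \<and> ereal (L1 d) * diam (D d) ^ 2 < ereal eps"
      using order_tendstoD(2)[OF lim] eventually_ge_at_top by (auto intro: eventually_conj)
    then show "\<forall>\<^sub>F d in sequentially. ?one d eps"
      by eventually_elim (use one \<open>0 < eps \<and> eps < 1\<close> in auto)
  qed
qed

end
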